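(* Let $G$ be a finite even semi-cactus. Then $G\square K_2$ is Hamiltonian.
   Context: A semi-cactus is a connected graph $G$ such that (1) its maximum degree is at most 4; (2) every block of $G$ is either a cycle or a $K_2$; and (3) every vertex lies in one or two blocks of $G$. It is even if every cycle of $G$ is even. $\square$ denotes the Cartesian product; Hamiltonian means having a Hamiltonian cycle. *)

theory Defs
  imports Main
begin

definition sgraph :: "'a set \<Rightarrow> ('a \<Rightarrow> 'a \<Rightarrow> bool) \<Rightarrow> bool" where
  "sgraph V E \<longleftrightarrow> (\<forall>x y. E x y \<longrightarrow> x \<in> V \<and> y \<in> V \<and> x \<noteq> y \<and> E y x)"

definition degree :: "('a \<Rightarrow> 'a \<Rightarrow> bool) \<Rightarrow> 'a \<Rightarrow> nat" where
  "degree E v = card {u. E v u}"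

definition connected_on :: "('a \<Rightarrow> 'a \<Rightarrow> bool) \<Rightarrow> 'a set \<Rightarrow> bool" where
  "connected_on E S \<longleftrightarrow>
     (\<forall>x\<in>S. \<forall>y\<in>S. (\<lambda>a b. E a b \<and> a \<in> S \<and> b \<in> S)\<^sup>*\<^sup>* x y)"

definition connected_graph :: "'a set \<Rightarrow> ('a \<Rightarrow> 'a \<Rightarrow> bool) \<Rightarrow> bool" where
  "connected_graph V E \<longleftrightarrow> V \<noteq> {} \<and> connected_on E V"

definition nonsep_on :: "('a \<Rightarrow> 'a \<Rightarrow> bool) \<Rightarrow> 'a set \<Rightarrow> bool" where
  "nonsep_on E S \<longleftrightarrow> S \<noteq> {} \<and> connected_on E S \<and> (\<forall>v\<in>S. connected_on E (S - {v}))"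

text \<open>A block: a maximal connected subgraph without cut vertex (blocks of a
  simple graph are induced, so we identify them with their vertex sets).\<close>
definition is_block :: "'a set \<Rightarrow> ('a \<Rightarrow> 'a \<Rightarrow> bool) \<Rightarrow> 'a set \<Rightarrow> bool" where
  "is_block V E B \<longleftrightarrow> B \<subseteq> V \<and> nonsep_on E B \<and>
     (\<forall>B'. B \<subseteq> B' \<and> B' \<subseteq> V \<and> nonsep_on E B' \<longrightarrow> B' = B)"

definition block_is_cycle :: "('a \<Rightarrow> 'a \<Rightarrow> bool) \<Rightarrow> 'a set \<Rightarrow> bool" where
  "block_is_cycle E B \<longleftrightarrow> finite B \<and> card B \<ge> 3 \<and> connected_on E B \<and>
     (\<forall>v\<in>B. card {u\<in>B. E v u} = 2)"

definition block_is_K2 :: "('a \<Rightarrow> 'a \<Rightarrow> bool) \<Rightarrow> 'a set \<Rightarrow> bool" where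
  "block_is_K2 E B \<longleftrightarrow> (\<exists>x y. B = {x, y} \<and> x \<noteq> y \<and> E x y)"

definition is_cycle :: "'a set \<Rightarrow> ('a \<Rightarrow> 'a \<Rightarrow> bool) \<Rightarrow> 'a list \<Rightarrow> bool" where
  "is_cycle V E cs \<longleftrightarrow> length cs \<ge> 3 \<and> distinct cs \<and> set cs \<subseteq> V \<and>
     (\<forall>i < length cs. E (cs ! i) (cs ! ((i + 1) mod length cs)))"

definition hamiltonian :: "'a set \<Rightarrow> ('a \<Rightarrow> 'a \<Rightarrow> bool) \<Rightarrow> bool" where
  "hamiltonian V E \<longleftrightarrow> (\<exists>cs. is_cycle V E cs \<and> set cs = V)"

definition semi_cactus :: "'a set \<Rightarrow> ('a \<Rightarrow> 'a \<Rightarrow> bool) \<Rightarrow> bool" where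
  "semi_cactus V E \<longleftrightarrow> sgraph V E \<and> connected_graph V E \<and>
     (\<forall>v\<in>V. degree E v \<le> 4) \<and>
     (\<forall>B. is_block V E B \<longrightarrow> block_is_cycle E B \<or> block_is_K2 E B) \<and>
     (\<forall>v\<in>V. card {B. is_block V E B \<and> v \<in> B} \<in> {1, 2})"

definition even_graph :: "'a set \<Rightarrow> ('a \<Rightarrow> 'a \<Rightarrow> bool) \<Rightarrow> bool" where
  "even_graph V E \<longleftrightarrow> (\<forall>cs. is_cycle V E cs \<longrightarrow> even (length cs))"

definition box_V :: "'a set \<Rightarrow> 'b set \<Rightarrow> ('a \<times> 'b) set" where
  "box_V V1 V2 = V1 \<times> V2"

definition box_E :: "('a \<Rightarrow> 'a \<Rightarrow> bool) \<Rightarrow> ('b \<Rightarrow> 'b \<Rightarrow> bool) \<Rightarrow> 'a set \<Rightarrow> 'b set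
     \<Rightarrow> ('a \<times> 'b) \<Rightarrow> ('a \<times> 'b) \<Rightarrow> bool" where
  "box_E E1 E2 V1 V2 p q \<longleftrightarrow> p \<in> V1 \<times> V2 \<and> q \<in> V1 \<times> V2 \<and>
     ((E1 (fst p) (fst q) \<and> snd p = snd q) \<or> (fst p = fst q \<and> E2 (snd p) (snd q)))"

definition K2_V :: "nat set" where "K2_V = {0, 1}"
definition K2_E :: "nat \<Rightarrow> nat \<Rightarrow> bool" where
  "K2_E x y \<longleftrightarrow> x \<in> K2_V \<and> y \<in> K2_V \<and> x \<noteq> y"

end

theory Submission
  imports Defs
begin

text \<open>Induction on the number of vertices, for a stronger claim: \<open>G \<box> K\<^sub>2\<close> has a Hamiltonian
  cycle that uses the rung \<open>(w,0)(w,1)\<close> of every vertex \<open>w\<close> lying in only one block.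
  If some vertex \<open>v\<close> lies in two blocks, \<open>v\<close> is a cut vertex; both sides of the cut are again
  even semi-cacti in which \<open>v\<close> lies in one block, so the cycles of their prisms both use the rung
  at \<open>v\<close>, and replacing this common edge by the rest of the other cycle glues them into one cycle.
  Otherwise \<open>G\<close> is a single block, i.e. \<open>K\<^sub>2\<close> or an even cycle, and the prism over it has a
  zigzag Hamiltonian cycle using every rung.\<close>

lemma induced_rtranclp_mono:
  assumes "(\<lambda>a b. E a b \<and> a \<in> S \<and> b \<in> S)\<^sup>*\<^sup>* x y" "S \<subseteq> T"
  shows "(\<lambda>a b. E a b \<and> a \<in> T \<and> b \<in> T)\<^sup>*\<^sup>* x y"
  using assms(1)
proof (induction rule: rtranclp_induct)
  case base then show ?case by simp
next
  case (step y z) then show ?case using assms(2)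
    by (auto intro: rtranclp.rtrancl_into_rtrancl)
qed

lemma connected_on_Un:
  assumes "connected_on E S" "connected_on E T" "S \<inter> T \<noteq> {}"
  shows "connected_on E (S \<union> T)"
  unfolding connected_on_def
proof (intro ballI)
  fix x y assume x: "x \<in> S \<union> T" and y: "y \<in> S \<union> T"
  obtain c where c: "c \<in> S" "c \<in> T" using assms(3) by blast
  let ?R = "\<lambda>a b. E a b \<and> a \<in> S \<union> T \<and> b \<in> S \<union> T"
  have h: "?R\<^sup>*\<^sup>* a b" if "a \<in> U" "b \<in> U" "connected_on E U" "U \<subseteq> S \<union> T" for a b U
    using that induced_rtranclp_mono[of E U a b "S \<union> T"] unfolding connected_on_def by blast
  have "?R\<^sup>*\<^sup>* x c" using x c h[of x S c] h[of x T c] assms by blast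
  moreover have "?R\<^sup>*\<^sup>* c y" using y c h[of c S y] h[of c T y] assms by blast
  ultimately show "?R\<^sup>*\<^sup>* x y" by (rule rtranclp_trans)
qed

lemma connected_on_singleton: "connected_on E {x}"
  unfolding connected_on_def by simp

lemma connected_on_edge:
  assumes "E x y" "E y x" shows "connected_on E {x, y}"
  unfolding connected_on_def
proof (intro ballI)
  fix a b assume "a \<in> {x,y}" "b \<in> {x,y}"
  then show "(\<lambda>a b. E a b \<and> a \<in> {x,y} \<and> b \<in> {x,y})\<^sup>*\<^sup>* a b"
    using assms by (auto intro: r_into_rtranclp)
qed

lemma connected_on_path:
  assumes "successively E xs" "xs \<noteq> []" "symp E"
  shows "connected_on E (set xs)"
  using assms(1,2)
proof (induction xs)
  case Nil then show ?case by simp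
next
  case (Cons x xs)
  show ?case
  proof (cases xs)
    case Nil then show ?thesis by (simp add: connected_on_singleton)
  next
    case (Cons y ys)
    have "connected_on E (set xs)" using Cons.IH Cons.prems \<open>xs = y # ys\<close> by simp
    moreover have "connected_on E {x, y}"
      using Cons.prems \<open>xs = y # ys\<close> assms(3) by (intro connected_on_edge) (auto dest: sympD)
    ultimately have "connected_on E ({x,y} \<union> set xs)"
      using \<open>xs = y # ys\<close> by - (rule connected_on_Un, auto)
    moreover have "{x,y} \<union> set xs = set (x # xs)" using \<open>xs = y # ys\<close> by auto
    ultimately show ?thesis by simp
  qed
qed

lemma connected_on_crossing_edge:
  assumes "connected_on E S" "T \<subseteq> S" "T \<noteq> {}" "S - T \<noteq> {}"
  shows "\<exists>a\<in>T. \<exists>b\<in>S - T. E a b"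
proof -
  obtain t s where t: "t \<in> T" and s: "s \<in> S - T" using assms by blast
  have "(\<lambda>a b. E a b \<and> a \<in> S \<and> b \<in> S)\<^sup>*\<^sup>* t s" using assms(1,2) t s
    unfolding connected_on_def by blast
  then have "s \<notin> T \<longrightarrow> (\<exists>a\<in>T. \<exists>b\<in>S - T. E a b)"
  proof (induction rule: rtranclp_induct)
    case base then show ?case using t by simp
  next
    case (step y z) then show ?case by blast
  qed
  then show ?thesis using s by blast
qed

lemma connected_on_closed_subset:
  assumes "connected_on E S" "x \<in> S" "x \<in> R"
    "\<And>a b. a \<in> R \<Longrightarrow> E a b \<Longrightarrow> b \<in> S \<Longrightarrow> b \<in> R"
  shows "S \<subseteq> R"
proof (rule ccontr)
  assume "\<not> S \<subseteq> R"
  then obtain a b where "a \<in> S \<inter> R" "b \<in> S - (S \<inter> R)" "E a b"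
    using connected_on_crossing_edge[OF assms(1), of "S \<inter> R"] assms(2,3) by blast
  then show False using assms(4) by blast
qed

lemma rtranclp_path:
  assumes "r\<^sup>*\<^sup>* a b"
  shows "\<exists>xs. xs \<noteq> [] \<and> hd xs = a \<and> last xs = b \<and> successively r xs"
  using assms
proof (induction rule: rtranclp_induct)
  case base then show ?case by (intro exI[of _ "[a]"]) simp
next
  case (step y z)
  then obtain xs where xs: "xs \<noteq> []" "hd xs = a" "last xs = y" "successively r xs" by blast
  then show ?case
    by (intro exI[of _ "xs @ [z]"]) (auto simp: successively_append_iff step.hyps(2))
qed

lemma successively_propagate:
  assumes "successively r xs" "\<And>a b. r a b \<Longrightarrow> Q b" "xs \<noteq> [] \<Longrightarrow> Q (hd xs)"
  shows "\<forall>x\<in>set xs. Q x"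
  using assms
proof (induction xs)
  case Nil then show ?case by simp
next
  case (Cons x xs)
  show ?case
  proof (cases xs)
    case Nil then show ?thesis using Cons.prems by simp
  next
    case (Cons y ys)
    then have "r x y" "successively r xs" using Cons.prems(1) by auto
    then have "\<forall>x\<in>set xs. Q x" using Cons.IH Cons.prems(2) \<open>xs = y # ys\<close> by auto
    then show ?thesis using Cons.prems(3) by simp
  qed
qed

lemma successively_drop_loop:
  assumes "successively r (xs @ y # ys @ y # zs)"
  shows "successively r (xs @ y # zs)"
proof -
  have "successively r xs" "successively r (y # ys @ y # zs)"
    "xs \<noteq> [] \<longrightarrow> r (last xs) y"
    using assms by (auto simp: successively_append_iff)
  moreover have "successively r (y # zs)"
    using successively_append_iff[of r "y # ys" "y # zs"] \<open>successively r (y # ys @ y # zs)\<close> by simp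
  ultimately show ?thesis by (auto simp: successively_append_iff)
qed

lemma nonsep_on_edge:
  assumes "E x y" "E y x" "x \<noteq> y"
  shows "nonsep_on E {x, y}"
proof -
  have eq: "{x,y} - {x} = {y}" "{x,y} - {y} = {x}" using assms(3) by auto
  have "connected_on E ({x,y} - {v})" if "v \<in> {x,y}" for v
  proof -
    from that have "v = x \<or> v = y" by simp
    then show ?thesis by (elim disjE) (simp_all only: eq connected_on_singleton)
  qed
  then show ?thesis unfolding nonsep_on_def
    using connected_on_edge[of E x y, OF assms(1,2)] by blast
qed

lemma nonsep_on_Un:
  assumes "nonsep_on E A" "nonsep_on E B" "x \<in> A" "x \<in> B" "y \<in> A" "y \<in> B" "x \<noteq> y"
  shows "nonsep_on E (A \<union> B)"
  unfolding nonsep_on_def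
proof (intro conjI ballI)
  show "A \<union> B \<noteq> {}" using assms by auto
  show "connected_on E (A \<union> B)"
    using assms by - (rule connected_on_Un, auto simp: nonsep_on_def)
  fix w assume "w \<in> A \<union> B"
  have cA: "connected_on E (A - {w})"
    using assms(1) unfolding nonsep_on_def by (cases "w \<in> A") auto
  have cB: "connected_on E (B - {w})"
    using assms(2) unfolding nonsep_on_def by (cases "w \<in> B") auto
  have "(A - {w}) \<inter> (B - {w}) \<noteq> {}" using assms by auto
  then have "connected_on E ((A - {w}) \<union> (B - {w}))" using cA cB by (rule connected_on_Un[rotated 2])
  moreover have "(A - {w}) \<union> (B - {w}) = A \<union> B - {w}" by auto
  ultimately show "connected_on E (A \<union> B - {w})" by simp
qed

lemma connected_on_Un_path:
  assumes "connected_on E S" "successively E p" "p \<noteq> []" "symp E" "set p \<inter> S \<noteq> {}"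
  shows "connected_on E (S \<union> set p)"
  using assms by (intro connected_on_Un connected_on_path) auto

lemma nonsep_on_ear:
  assumes A: "nonsep_on E A" and ab: "a \<in> A" "b \<in> A" "a \<noteq> b"
    and path: "successively E (a # mid @ [b])" and dist: "distinct (a # mid @ [b])"
    and disj: "set mid \<inter> A = {}" and sym: "symp E"
  shows "nonsep_on E (A \<union> set mid)"
proof -
  have cA: "connected_on E A" and cA': "\<And>w. w \<in> A \<Longrightarrow> connected_on E (A - {w})"
    using A unfolding nonsep_on_def by auto
  have "connected_on E (A \<union> set (a # mid @ [b]))"
    using connected_on_Un_path[OF cA path _ sym] ab by auto
  moreover have "A \<union> set (a # mid @ [b]) = A \<union> set mid" using ab by auto
  ultimately have c0: "connected_on E (A \<union> set mid)" by simp
  have cw: "connected_on E (A \<union> set mid - {w})" if w: "w \<in> A \<union> set mid" for w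
  proof (cases "w \<in> A")
    case True
    \<comment> \<open>At least one end of the ear survives the removal of \<open>w\<close>.\<close>
    obtain c ear where c: "c \<in> A - {w}" and ear: "successively E ear" "ear \<noteq> []"
      and set_ear: "set ear = insert c (set mid)"
    proof (cases "w = a")
      case True
      have "successively E (mid @ [b])" using path by (simp add: successively_Cons)
      moreover have "b \<in> A - {w}" using ab True by auto
      ultimately show ?thesis by (intro that[of b "mid @ [b]"]) auto
    next
      case False
      have "successively E (a # mid)"
        using path successively_append_iff[of E "a # mid" "[b]"] by simp
      moreover have "a \<in> A - {w}" using ab False by auto
      ultimately show ?thesis by (intro that[of a "a # mid"]) auto
    qed
    have "connected_on E ((A - {w}) \<union> set ear)"
      using connected_on_Un_path[OF cA'[OF True] ear sym] c set_ear by blast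
    moreover have "(A - {w}) \<union> set ear = A \<union> set mid - {w}"
      using c set_ear disj True by auto
    ultimately show ?thesis by simp
  next
    case False
    then have "w \<in> set mid" using w by auto
    then obtain xs ys where mid: "mid = xs @ w # ys" by (meson split_list)
    have s1: "successively E (a # xs)"
      using path mid successively_append_iff[of E "a # xs" "w # ys @ [b]"] by simp
    have s2: "successively E (ys @ [b])" using path mid
      by (simp add: successively_append_iff successively_Cons)
    have "connected_on E (A \<union> set (a # xs))"
      using connected_on_Un_path[OF cA s1 _ sym] ab by auto
    then have "connected_on E ((A \<union> set (a # xs)) \<union> set (ys @ [b]))"
      using ab by (intro connected_on_Un_path[OF _ s2 _ sym]) auto
    moreover have "(A \<union> set (a # xs)) \<union> set (ys @ [b]) = A \<union> set mid - {w}"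
      using dist mid ab False by auto
    ultimately show ?thesis by simp
  qed
  show ?thesis unfolding nonsep_on_def using c0 cw ab by auto
qed

lemma finite_blocks: "finite V \<Longrightarrow> finite {B. is_block V E B \<and> P B}"
  by (rule finite_subset[of _ "Pow V"]) (auto simp: is_block_def)

lemma nonsep_on_in_block:
  assumes "finite V" "T \<subseteq> V" "nonsep_on E T"
  shows "\<exists>B. is_block V E B \<and> T \<subseteq> B"
proof -
  let ?F = "{S. T \<subseteq> S \<and> S \<subseteq> V \<and> nonsep_on E S}"
  have fin: "finite ?F" by (rule finite_subset[of _ "Pow V"]) (use assms(1) in auto)
  have "T \<in> ?F" using assms by auto
  then obtain S where S: "S \<in> ?F" and max: "\<And>S'. S' \<in> ?F \<Longrightarrow> card S' \<le> card S"
    using ex_has_greatest_nat[of "\<lambda>S. S \<in> ?F" T card "Suc (card V)"] assms(1)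
    by (metis (no_types, lifting) card_mono le_imp_less_Suc mem_Collect_eq)
  have "is_block V E S" unfolding is_block_def
  proof (intro conjI allI impI)
    show "S \<subseteq> V" "nonsep_on E S" using S by auto
    fix B' assume B': "S \<subseteq> B' \<and> B' \<subseteq> V \<and> nonsep_on E B'"
    then have "card B' \<le> card S" using S max by auto
    moreover have "finite B'" using B' assms(1) finite_subset by blast
    ultimately show "B' = S" using B' card_seteq by blast
  qed
  then show ?thesis using S by auto
qed

lemma block_eq_if_two_common:
  assumes "is_block V E B" "is_block V E B'" "x \<in> B" "x \<in> B'" "y \<in> B" "y \<in> B'" "x \<noteq> y"
  shows "B = B'"
proof -
  have "nonsep_on E (B \<union> B')" using assms unfolding is_block_def
    by (intro nonsep_on_Un[of _ _ _ x y]) auto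
  then have "B \<union> B' = B" "B \<union> B' = B'" using assms unfolding is_block_def
    by (metis Un_subset_iff sup_ge1 sup_ge2)+
  then show ?thesis by simp
qed

lemma sgraph_symp: "sgraph V E \<Longrightarrow> symp E"
  unfolding sgraph_def symp_def by blast

lemma block_has_neighbour:
  assumes sc: "semi_cactus V E" and b: "is_block V E B" and vB: "v \<in> B"
  shows "\<exists>u\<in>B. u \<noteq> v \<and> E v u"
proof -
  have sg: "sgraph V E" using sc unfolding semi_cactus_def by blast
  have "block_is_cycle E B \<or> block_is_K2 E B" using sc b unfolding semi_cactus_def by blast
  then show ?thesis
  proof
    assume "block_is_cycle E B"
    then have "card {u\<in>B. E v u} = 2" using vB unfolding block_is_cycle_def by blast
    then obtain u where "u \<in> B" "E v u"
      by (metis (no_types, lifting) card.empty empty_Collect_eq zero_neq_numeral)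
    moreover have "u \<noteq> v" using sg \<open>E v u\<close> unfolding sgraph_def by blast
    ultimately show ?thesis by blast
  next
    assume "block_is_K2 E B"
    then obtain x y where "B = {x, y}" "x \<noteq> y" "E x y" unfolding block_is_K2_def by blast
    moreover have "E y x" using sg \<open>E x y\<close> unfolding sgraph_def by blast
    ultimately show ?thesis using vB by auto
  qed
qed

lemma rtranclp_shortest_path_from_set:
  assumes "r\<^sup>*\<^sup>* b u" "b \<in> S"
  shows "\<exists>p. p \<noteq> [] \<and> hd p \<in> S \<and> last p = u \<and> successively r p \<and> distinct p \<and>
             set (tl p) \<inter> S = {}"
proof -
  define P where "P p \<longleftrightarrow> p \<noteq> [] \<and> hd p \<in> S \<and> last p = u \<and> successively r p" for p
  obtain p0 where "P p0" using rtranclp_path[OF assms(1)] assms(2) unfolding P_def by blast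
  then obtain p where Pp: "P p" and shortest: "\<And>q. P q \<Longrightarrow> length p \<le> length q"
    using ex_has_least_nat[of P p0 length] by blast
  have pne: "p \<noteq> []" and sp: "successively r p" using Pp unfolding P_def by auto
  have "distinct p"
  proof (rule ccontr)
    assume "\<not> distinct p"
    then obtain xs y ys zs where p: "p = xs @ [y] @ ys @ [y] @ zs"
      using not_distinct_decomp by blast
    define q where "q = xs @ y # zs"
    have "hd q = hd p" unfolding q_def p by (cases xs) auto
    moreover have "last q = last p" unfolding q_def p by (cases "zs = []") auto
    moreover have "successively r q" using sp successively_drop_loop unfolding q_def p by simp
    ultimately have "P q" using Pp unfolding P_def q_def by auto
    moreover have "length q < length p" unfolding q_def p by simp
    ultimately show False using shortest by fastforce
  qed
  moreover have "set (tl p) \<inter> S = {}"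
  proof (rule ccontr)
    assume "set (tl p) \<inter> S \<noteq> {}"
    then obtain z xs ys where z: "z \<in> S" and tp: "tl p = xs @ z # ys"
      by (metis disjoint_iff split_list)
    have p: "p = hd p # xs @ z # ys" using tp pne by (metis list.collapse)
    have "successively r (z # ys)"
      using sp successively_append_iff[of r "hd p # xs" "z # ys"] by (subst (asm) p) simp
    moreover have "last (z # ys) = last p" by (subst p) simp
    ultimately have "P (z # ys)" using Pp z unfolding P_def by auto
    moreover have "length (z # ys) < length p" using arg_cong[OF p, of length] by simp
    ultimately show False using shortest by fastforce
  qed
  ultimately show ?thesis using Pp unfolding P_def by blast
qed

definition induced :: "('a \<Rightarrow> 'a \<Rightarrow> bool) \<Rightarrow> 'a set \<Rightarrow> 'a \<Rightarrow> 'a \<Rightarrow> bool" where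
  "induced E S a b \<longleftrightarrow> E a b \<and> a \<in> S \<and> b \<in> S"

lemma connected_on_induced: "S \<subseteq> T \<Longrightarrow> connected_on (induced E T) S = connected_on E S"
proof -
  assume "S \<subseteq> T"
  then have "(\<lambda>a b. induced E T a b \<and> a \<in> S \<and> b \<in> S) = (\<lambda>a b. E a b \<and> a \<in> S \<and> b \<in> S)"
    by (auto simp: fun_eq_iff induced_def)
  then show ?thesis unfolding connected_on_def by simp
qed

lemma nonsep_on_induced: "S \<subseteq> T \<Longrightarrow> nonsep_on (induced E T) S = nonsep_on E S"
  unfolding nonsep_on_def using connected_on_induced[of S T E] connected_on_induced[of "S - {_}" T E]
  by (metis Diff_subset subset_trans)

text \<open>A shortest such path, closed up through \<open>v\<close>, would be an ear of \<open>B\<close>,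
  contradicting the maximality of the block.\<close>

lemma block_neighbour_unreachable:
  assumes sg: "sgraph V E" and blk: "is_block V E B" and vB: "v \<in> B" and uB: "u \<notin> B"
    and vu: "E v u" and bB: "b \<in> B - {v}"
  shows "\<not> (induced E (V - {v}))\<^sup>*\<^sup>* b u"
proof
  assume "(induced E (V - {v}))\<^sup>*\<^sup>* b u"
  then obtain p where pne: "p \<noteq> []" and hdp: "hd p \<in> B - {v}" and lastp: "last p = u"
    and sp: "successively (induced E (V - {v})) p" and dp: "distinct p"
    and tlB: "set (tl p) \<inter> (B - {v}) = {}"
    using rtranclp_shortest_path_from_set[of _ b u "B - {v}"] bB by blast
  have BV: "B \<subseteq> V" using blk unfolding is_block_def by auto
  have inV: "\<forall>x\<in>set p. x \<in> V - {v}"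
    by (rule successively_propagate[OF sp]) (use hdp BV in \<open>auto simp: induced_def\<close>)
  have tlB': "set (tl p) \<inter> B = {}" using tlB inV pne by (auto dest: list.set_sel(2))
  have tne: "tl p \<noteq> []"
  proof
    assume "tl p = []"
    then have "hd p = last p" using pne by (metis last_ConsL list.collapse)
    then show False using hdp lastp uB by simp
  qed
  have sy: "symp E" using sgraph_symp[OF sg] .
  have pv: "hd p # tl p @ [v] = p @ [v]" using pne by simp
  have "successively E p" using sp by (rule successively_mono) (simp add: induced_def)
  moreover have "E (last p) v" using vu lastp sy by (blast dest: sympD)
  ultimately have ear: "successively E (hd p # tl p @ [v])"
    unfolding pv using pne by (simp add: successively_append_iff)
  have "distinct (hd p # tl p @ [v])" unfolding pv using dp inV by auto
  then have "nonsep_on E (B \<union> set (tl p))"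
    by (intro nonsep_on_ear[OF _ _ vB _ ear _ tlB' sy]) (use blk hdp in \<open>auto simp: is_block_def\<close>)
  moreover have "B \<union> set (tl p) \<subseteq> V" using BV inV pne by (auto dest: list.set_sel(2))
  ultimately have "B \<union> set (tl p) = B" using blk unfolding is_block_def by blast
  moreover have "u \<in> set (tl p)" using lastp tne pne by (metis last_in_set last_tl)
  ultimately show False using uB by blast
qed

locale cut_split =
  fixes V V1 V2 :: "'a set" and E :: "'a \<Rightarrow> 'a \<Rightarrow> bool" and v :: 'a
  assumes fin: "finite V" and semi_cactus: "semi_cactus V E"
    and sides_Un: "V = V1 \<union> V2" and sides_Int: "V1 \<inter> V2 = {v}"
    and no_cross_edge: "\<And>a b. a \<in> V1 - {v} \<Longrightarrow> b \<in> V2 - {v} \<Longrightarrow> \<not> E a b"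
    and side1_nontrivial: "V1 - {v} \<noteq> {}" and side2_nontrivial: "V2 - {v} \<noteq> {}"
begin

lemma sgraph: "sgraph V E"
  using semi_cactus unfolding semi_cactus_def by blast

lemma no_cross_edge': "a \<in> V1 - {v} \<Longrightarrow> b \<in> V2 - {v} \<Longrightarrow> \<not> E b a"
  using no_cross_edge sgraph unfolding sgraph_def by blast

lemma swap: "cut_split V V2 V1 E v"
  by unfold_locales (use fin semi_cactus sides_Un sides_Int no_cross_edge' side1_nontrivial
      side2_nontrivial in auto)

lemma cut_in_side: "v \<in> V1"
  using sides_Int by blast

lemma side_subset: "V1 \<subseteq> V"
  using sides_Un by blast

lemma side_finite: "finite V1"
  using fin side_subset finite_subset by blast

lemma side_card_less: "card V1 < card V"
  using side2_nontrivial sides_Int sides_Un by (intro psubset_card_mono[OF fin]) auto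

lemma connected_avoiding_cut_in_side:
  assumes "connected_on E S" "S \<subseteq> V - {v}" "S \<inter> (V1 - {v}) \<noteq> {}"
  shows "S \<subseteq> V1 - {v}"
proof -
  obtain x where "x \<in> S" "x \<in> V1 - {v}" using assms(3) by blast
  then show ?thesis
  proof (rule connected_on_closed_subset[OF assms(1)])
    fix a b assume "a \<in> V1 - {v}" "E a b" "b \<in> S"
    then show "b \<in> V1 - {v}" using no_cross_edge[of a b] assms(2) sides_Un by blast
  qed
qed

lemma nonsep_in_side:
  assumes "nonsep_on E B" "B \<subseteq> V" "B \<inter> (V1 - {v}) \<noteq> {}"
  shows "B \<subseteq> V1"
proof -
  have "connected_on E (B - {v})"
    using assms(1) unfolding nonsep_on_def by (cases "v \<in> B") auto
  then have "B - {v} \<subseteq> V1 - {v}" using assms by (intro connected_avoiding_cut_in_side) auto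
  then show ?thesis using cut_in_side by blast
qed

lemma side_connected: "connected_on E V1"
proof -
  have cV: "connected_on E V" using semi_cactus unfolding semi_cactus_def connected_graph_def by blast
  let ?r = "\<lambda>a b. E a b \<and> a \<in> V1 \<and> b \<in> V1"
  have "?r\<^sup>*\<^sup>* v y" if "y \<in> V1" for y
  proof -
    have "(\<lambda>a b. E a b \<and> a \<in> V \<and> b \<in> V)\<^sup>*\<^sup>* v y"
      using cV that cut_in_side side_subset unfolding connected_on_def by blast
    then have "y \<in> V1 \<longrightarrow> ?r\<^sup>*\<^sup>* v y"
    proof (induction rule: rtranclp_induct)
      case base then show ?case by simp
    next
      case (step y z)
      \<comment> \<open>A walk can only re-enter \<open>V1\<close> through the cut vertex.\<close>
      have "y \<in> V1 \<or> z = v" if "z \<in> V1"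
        using step.hyps(2) no_cross_edge'[of z y] that sides_Un cut_in_side by blast
      then show ?case using step by (auto intro: rtranclp.rtrancl_into_rtrancl)
    qed
    then show ?thesis using that by blast
  qed
  moreover have "symp ?r" using sgraph unfolding sgraph_def symp_def by blast
  ultimately show ?thesis unfolding connected_on_def
    by (meson rtranclp_trans sympD symp_rtranclp)
qed

lemma cut_has_side_neighbour: "\<exists>u\<in>V1 - {v}. E v u"
  using connected_on_crossing_edge[OF side_connected, of "{v}"] cut_in_side side1_nontrivial by blast

lemma side_block_iff: "is_block V1 (induced E V1) B \<longleftrightarrow> is_block V E B \<and> B \<subseteq> V1"
proof
  assume b1: "is_block V1 (induced E V1) B"
  have BV1: "B \<subseteq> V1" using b1 unfolding is_block_def by blast
  have nsB: "nonsep_on E B" using b1 nonsep_on_induced[OF BV1, of E] unfolding is_block_def by blast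
  have max: "B' = B" if "B \<subseteq> B'" "B' \<subseteq> V1" "nonsep_on E B'" for B'
    using b1 that nonsep_on_induced[OF that(2), of E] unfolding is_block_def by blast
  show "is_block V E B \<and> B \<subseteq> V1"
  proof (cases "B \<inter> (V1 - {v}) = {}")
    case True
    \<comment> \<open>\<open>B = {v}\<close> is impossible, as \<open>v\<close> has a neighbour in \<open>V1\<close>.\<close>
    then have "B = {v}" using BV1 nsB unfolding nonsep_on_def by blast
    obtain u where u: "u \<in> V1 - {v}" "E v u" using cut_has_side_neighbour by blast
    have "nonsep_on E {v, u}" using u sgraph unfolding sgraph_def by (intro nonsep_on_edge) auto
    then have "{v, u} = B" using max[of "{v,u}"] \<open>B = {v}\<close> u cut_in_side by blast
    then show ?thesis using u \<open>B = {v}\<close> by auto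
  next
    case False
    have "is_block V E B" unfolding is_block_def
    proof (intro conjI allI impI)
      show "B \<subseteq> V" "nonsep_on E B" using BV1 side_subset nsB by auto
      fix B' assume B': "B \<subseteq> B' \<and> B' \<subseteq> V \<and> nonsep_on E B'"
      then have "B' \<subseteq> V1" using False by (intro nonsep_in_side) auto
      then show "B' = B" using max B' by blast
    qed
    then show ?thesis using BV1 by blast
  qed
next
  assume "is_block V E B \<and> B \<subseteq> V1"
  then show "is_block V1 (induced E V1) B"
    unfolding is_block_def using nonsep_on_induced side_subset by (metis subset_trans)
qed

lemma side_blocks_at:
  assumes "w \<in> V1 - {v}"
  shows "{B. is_block V1 (induced E V1) B \<and> w \<in> B} = {B. is_block V E B \<and> w \<in> B}"
proof -
  have "B \<subseteq> V1" if "is_block V E B" "w \<in> B" for B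
    using that assms unfolding is_block_def by (intro nonsep_in_side) auto
  then show ?thesis using side_block_iff by blast
qed

lemma side_vertex_in_block:
  assumes w: "w \<in> V1"
  shows "\<exists>B. is_block V1 (induced E V1) B \<and> w \<in> B"
proof (cases "w = v")
  case False
  have "card {B. is_block V E B \<and> w \<in> B} \<in> {1,2}"
    using semi_cactus w side_subset unfolding semi_cactus_def by blast
  then have "{B. is_block V E B \<and> w \<in> B} \<noteq> {}" by (intro notI) simp
  then show ?thesis using side_blocks_at[of w] w False by auto
next
  case True
  obtain u where u: "u \<in> V1 - {v}" "E v u" using cut_has_side_neighbour by blast
  have "nonsep_on E {v, u}" using u sgraph unfolding sgraph_def by (intro nonsep_on_edge) auto
  moreover have "{v,u} \<subseteq> V" using u cut_in_side side_subset by blast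
  ultimately obtain B where B: "is_block V E B" "{v,u} \<subseteq> B"
    using nonsep_on_in_block[OF fin] by blast
  then have "B \<subseteq> V1" using u unfolding is_block_def by (intro nonsep_in_side) auto
  then show ?thesis using B True side_block_iff by blast
qed

lemma side_semi_cactus: "semi_cactus V1 (induced E V1)"
  unfolding semi_cactus_def
proof (intro conjI ballI allI impI)
  show "sgraph V1 (induced E V1)" using sgraph unfolding sgraph_def induced_def by blast
  show "connected_graph V1 (induced E V1)" unfolding connected_graph_def
    using side_connected connected_on_induced[of V1 V1 E] cut_in_side by auto
  fix w assume w: "w \<in> V1"
  have "finite {u. E w u}" using sgraph fin unfolding sgraph_def
    by (metis (no_types, lifting) mem_Collect_eq rev_finite_subset subsetI)
  then have "degree (induced E V1) w \<le> degree E w"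
    unfolding degree_def induced_def by (rule card_mono) auto
  then show "degree (induced E V1) w \<le> 4"
    using semi_cactus w side_subset unfolding semi_cactus_def by force
next
  fix B assume "is_block V1 (induced E V1) B"
  then have b: "is_block V E B" "B \<subseteq> V1" using side_block_iff by auto
  then have "block_is_cycle E B \<or> block_is_K2 E B" using semi_cactus unfolding semi_cactus_def by blast
  moreover have "block_is_cycle (induced E V1) B = block_is_cycle E B"
  proof -
    have "\<forall>x\<in>B. {u \<in> B. induced E V1 x u} = {u \<in> B. E x u}" using b by (auto simp: induced_def)
    then show ?thesis unfolding block_is_cycle_def using connected_on_induced[OF b(2)] by simp
  qed
  moreover have "block_is_K2 (induced E V1) B = block_is_K2 E B"
    unfolding block_is_K2_def induced_def using b(2) by auto
  ultimately show "block_is_cycle (induced E V1) B \<or> block_is_K2 (induced E V1) B" by simp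
next
  fix w assume w: "w \<in> V1"
  let ?S1 = "{B. is_block V1 (induced E V1) B \<and> w \<in> B}"
  let ?S = "{B. is_block V E B \<and> w \<in> B}"
  have sub: "?S1 \<subseteq> ?S" using side_block_iff by blast
  have fS: "finite ?S" by (rule finite_blocks[OF fin])
  have "card ?S \<in> {1,2}" using semi_cactus w side_subset unfolding semi_cactus_def by blast
  then have "card ?S1 \<le> 2" using card_mono[OF fS sub] by auto
  moreover have "card ?S1 \<noteq> 0"
    using side_vertex_in_block[OF w] finite_subset[OF sub fS] by auto
  ultimately show "card ?S1 \<in> {1,2}" by auto
qed

lemma side_even: "even_graph V E \<Longrightarrow> even_graph V1 (induced E V1)"
  unfolding even_graph_def is_cycle_def induced_def using side_subset by blast

end

lemma reachable_set:
  fixes E :: "'a \<Rightarrow> 'a \<Rightarrow> bool"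
  assumes "S \<subseteq> T"
  defines "R \<equiv> {x. \<exists>s\<in>S. (induced E T)\<^sup>*\<^sup>* s x}"
  shows "R \<subseteq> T" and "S \<subseteq> R" and "x \<in> R \<Longrightarrow> E x y \<Longrightarrow> y \<in> T \<Longrightarrow> y \<in> R"
proof -
  show "R \<subseteq> T"
  proof
    fix x assume "x \<in> R"
    then obtain s where s: "s \<in> S" "(induced E T)\<^sup>*\<^sup>* s x" unfolding R_def by blast
    from s(2) show "x \<in> T"
      by (induction rule: rtranclp_induct) (use s(1) assms(1) in \<open>auto simp: induced_def\<close>)
  qed
  show "S \<subseteq> R" unfolding R_def by blast
  assume xy: "x \<in> R" "E x y" "y \<in> T"
  then obtain s where "s \<in> S" "(induced E T)\<^sup>*\<^sup>* s x" unfolding R_def by blast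
  moreover have "induced E T x y" using xy \<open>R \<subseteq> T\<close> unfolding induced_def by blast
  ultimately have "s \<in> S" "(induced E T)\<^sup>*\<^sup>* s y" by (auto intro: rtranclp.rtrancl_into_rtrancl)
  then show "y \<in> R" unfolding R_def by blast
qed

text \<open>\<open>V1\<close> consists of \<open>v\<close> and everything reachable from \<open>B1 - {v}\<close> in \<open>G - v\<close>.\<close>

lemma cut_vertex_split:
  assumes fin: "finite V" and sc: "semi_cactus V E"
    and b1: "is_block V E B1" "v \<in> B1" and b2: "is_block V E B2" "v \<in> B2" and B12: "B1 \<noteq> B2"
  shows "\<exists>V1 V2. cut_split V V1 V2 E v \<and> B1 \<subseteq> V1 \<and> B2 \<subseteq> V2"
proof -
  have sg: "sgraph V E" using sc unfolding semi_cactus_def by blast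
  have B1V: "B1 \<subseteq> V" and B2V: "B2 \<subseteq> V" using b1 b2 unfolding is_block_def by auto
  define R where "R = {x. \<exists>b\<in>B1 - {v}. (induced E (V - {v}))\<^sup>*\<^sup>* b x}"
  have "B1 - {v} \<subseteq> V - {v}" using B1V by blast
  note reach = reachable_set[OF this, where E=E, folded R_def]
  have RV: "R \<subseteq> V - {v}" and B1R: "B1 - {v} \<subseteq> R"
    and R_closed: "\<And>x y. x \<in> R \<Longrightarrow> E x y \<Longrightarrow> y \<in> V - {v} \<Longrightarrow> y \<in> R"
    by (fact reach)+
  obtain u where u: "u \<in> B2" "u \<noteq> v" "E v u" using block_has_neighbour[OF sc b2] by blast
  obtain b where b: "b \<in> B1" "b \<noteq> v" using block_has_neighbour[OF sc b1] by blast
  have "u \<notin> B1" using block_eq_if_two_common[OF b1(1) b2(1) b1(2) b2(2) _ u(1) u(2)[symmetric]] B12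
    by blast
  then have uR: "u \<notin> R"
    using block_neighbour_unreachable[OF sg b1(1) b1(2) _ u(3)] unfolding R_def by blast
  have B2R: "B2 \<inter> R = {}"
  proof (rule ccontr)
    assume "B2 \<inter> R \<noteq> {}"
    then obtain w where w: "w \<in> B2 - {v}" "w \<in> R" using RV by blast
    have "connected_on E (B2 - {v})" using b2 unfolding is_block_def nonsep_on_def by blast
    then have "B2 - {v} \<subseteq> R"
      by (rule connected_on_closed_subset[OF _ w]) (use R_closed B2V in blast)
    then show False using u uR by blast
  qed
  have "cut_split V (insert v R) (V - R) E v"
  proof
    show "finite V" "semi_cactus V E" by (fact fin, fact sc)
    show "V = insert v R \<union> (V - R)" "insert v R \<inter> (V - R) = {v}" using RV b1(2) B1V by auto
    show "\<not> E a c" if "a \<in> insert v R - {v}" "c \<in> V - R - {v}" for a c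
      using that R_closed by blast
    show "insert v R - {v} \<noteq> {}" using B1R b by blast
    show "V - R - {v} \<noteq> {}" using uR u B2V by blast
  qed
  moreover have "B1 \<subseteq> insert v R" "B2 \<subseteq> V - R" using B1R B2R B2V by auto
  ultimately show ?thesis by blast
qed

definition cycle_list :: "('a \<Rightarrow> 'a \<Rightarrow> bool) \<Rightarrow> 'a list \<Rightarrow> bool" where
  "cycle_list R cs \<longleftrightarrow> length cs \<ge> 3 \<and> distinct cs \<and> successively R cs \<and> R (last cs) (hd cs)"

lemma is_cycle_iff_cycle_list: "is_cycle V E cs \<longleftrightarrow> cycle_list E cs \<and> set cs \<subseteq> V"
proof
  assume h: "is_cycle V E cs"
  then have l: "length cs \<ge> 3" and a: "\<forall>i<length cs. E (cs ! i) (cs ! ((i + 1) mod length cs))"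
    unfolding is_cycle_def by auto
  have "successively E cs" unfolding successively_conv_nth
  proof (intro allI impI)
    fix i assume "Suc i < length cs"
    then show "E (cs ! i) (cs ! Suc i)" using a[rule_format, of i] by simp
  qed
  moreover have "E (last cs) (hd cs)"
  proof -
    obtain n where n: "length cs = Suc n" using l by (cases "length cs") auto
    have "E (cs ! n) (cs ! 0)" using a[rule_format, of n] n by simp
    moreover have ne: "cs \<noteq> []" using n by auto
    ultimately show ?thesis using n by (simp add: last_conv_nth[OF ne] hd_conv_nth[OF ne])
  qed
  ultimately show "cycle_list E cs \<and> set cs \<subseteq> V" using h unfolding is_cycle_def cycle_list_def by auto
next
  assume h: "cycle_list E cs \<and> set cs \<subseteq> V"
  then have l: "length cs \<ge> 3" and s: "successively E cs" and w: "E (last cs) (hd cs)"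
    unfolding cycle_list_def by auto
  have "E (cs ! i) (cs ! ((i + 1) mod length cs))" if "i < length cs" for i
  proof (cases "Suc i < length cs")
    case True then show ?thesis using successively_nth[OF s True] by simp
  next
    case False
    obtain n where n: "length cs = Suc n" using l by (cases "length cs") auto
    then have "i = n" using that False by simp
    moreover have ne: "cs \<noteq> []" using n by auto
    ultimately show ?thesis using w n by (simp add: last_conv_nth[OF ne] hd_conv_nth[OF ne])
  qed
  then show "is_cycle V E cs" using h unfolding is_cycle_def cycle_list_def by auto
qed

fun path_edges :: "'a list \<Rightarrow> 'a set set" where
  "path_edges (x # y # zs) = insert {x, y} (path_edges (y # zs))"
| "path_edges _ = {}"

definition cycle_edges :: "'a list \<Rightarrow> 'a set set" where
  "cycle_edges cs = (if cs = [] then {} else insert {last cs, hd cs} (path_edges cs))"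

lemma path_edges_Cons: "path_edges (x # xs) = (if xs = [] then {} else insert {x, hd xs} (path_edges xs))"
  by (cases xs) auto

lemma path_edges_append:
  "path_edges (xs @ ys) = path_edges xs \<union> path_edges ys \<union> (if xs = [] \<or> ys = [] then {} else {{last xs, hd ys}})"
proof (induction xs)
  case Nil then show ?case by simp
next
  case (Cons x xs)
  then show ?case by (cases xs; cases ys) (auto simp: path_edges_Cons)
qed

lemma path_edges_rev: "path_edges (rev xs) = path_edges xs"
proof (induction xs)
  case Nil then show ?case by simp
next
  case (Cons x xs)
  show ?case
  proof (cases xs)
    case Nil then show ?thesis by simp
  next
    case (Cons y ys)
    have "path_edges (rev (x#xs)) = path_edges (rev xs @ [x])" by simp
    also have "\<dots> = path_edges (rev xs) \<union> {{last (rev xs), x}}"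
      using path_edges_append[of "rev xs" "[x]"] Cons by simp
    also have "\<dots> = path_edges xs \<union> {{y, x}}" using Cons.IH Cons by (simp add: last_rev)
    also have "\<dots> = path_edges (x # xs)" using Cons by (auto simp: insert_commute)
    finally show ?thesis .
  qed
qed

lemma cycle_edges_rev: "cycle_edges (rev xs) = cycle_edges xs"
  unfolding cycle_edges_def path_edges_rev by (cases xs) (auto simp: last_rev hd_rev insert_commute)

lemma path_edges_split: "e \<in> path_edges xs \<Longrightarrow> \<exists>us a b ws. xs = us @ a # b # ws \<and> e = {a, b}"
proof (induction xs rule: path_edges.induct)
  case (1 x y zs)
  show ?case
  proof (cases "e = {x, y}")
    case True then show ?thesis by (intro exI[of _ "[]"]) auto
  next
    case False
    then have "e \<in> path_edges (y # zs)" using 1 by simp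
    then obtain us a b ws where "y # zs = us @ a # b # ws" "e = {a,b}" using 1 by blast
    then show ?thesis by (intro exI[of _ "x # us"]) auto
  qed
qed auto

lemma cycle_list_rotate:
  assumes "cycle_list R (us @ ws)" "us \<noteq> []" "ws \<noteq> []"
  shows "cycle_list R (ws @ us)"
  using assms unfolding cycle_list_def by (auto simp: successively_append_iff)

lemma cycle_edges_rotate:
  assumes "us \<noteq> []" "ws \<noteq> []"
  shows "cycle_edges (ws @ us) = cycle_edges (us @ ws)"
  using assms unfolding cycle_edges_def by (auto simp: path_edges_append)

lemma cycle_list_rev:
  assumes "symp R" "cycle_list R cs"
  shows "cycle_list R (rev cs)"
proof -
  have "successively R cs" "R (last cs) (hd cs)" "length cs \<ge> 3" "distinct cs"
    using assms(2) unfolding cycle_list_def by auto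
  moreover have "successively (\<lambda>x y. R y x) cs" using \<open>successively R cs\<close>
    by (rule successively_mono) (use assms(1) in \<open>blast dest: sympD\<close>)
  ultimately show ?thesis unfolding cycle_list_def
    using assms(1) by (auto simp: last_rev hd_rev dest: sympD)
qed

lemma cycle_list_open_at_edge:
  assumes sym: "symp R" and c: "cycle_list R cs" and e: "{x, y} \<in> cycle_edges cs"
  shows "\<exists>m. cycle_list R (x # m @ [y]) \<and> set (x # m @ [y]) = set cs
              \<and> cycle_edges (x # m @ [y]) = cycle_edges cs"
proof -
  have l: "length cs \<ge> 3" using c unfolding cycle_list_def by simp
  obtain x' m y' where xy': "{x', y'} = {x, y}" and cs': "cycle_list R (x' # m @ [y'])"
    "set (x' # m @ [y']) = set cs" "cycle_edges (x' # m @ [y']) = cycle_edges cs"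
  proof (cases "{x, y} = {last cs, hd cs}")
    case True
    have tne: "tl cs \<noteq> []" using l by (cases cs) auto
    have "hd cs # butlast (tl cs) @ [last cs] = cs"
      using l tne by (metis append_butlast_last_id last_tl list.collapse list.size(3) not_numeral_le_zero)
    then show ?thesis using c True by (intro that[where x'="hd cs" and m="butlast (tl cs)" and y'="last cs"]) auto
  next
    case False
    then have "{x, y} \<in> path_edges cs" using e unfolding cycle_edges_def by (auto split: if_splits)
    then obtain us a b ws where cs: "cs = us @ a # b # ws" and ab: "{x, y} = {a, b}"
      using path_edges_split by blast
    have "cycle_list R ((us @ [a]) @ (b # ws))" using c cs by simp
    then have "cycle_list R ((b # ws) @ (us @ [a]))" by (rule cycle_list_rotate) auto
    moreover have "cycle_edges ((b # ws) @ (us @ [a])) = cycle_edges ((us @ [a]) @ (b # ws))"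
      by (rule cycle_edges_rotate) auto
    ultimately show ?thesis using cs ab by (intro that[where x'=b and m="ws @ us" and y'=a]) (auto simp: insert_commute)
  qed
  show ?thesis
  proof (cases "x' = x")
    case True
    then have "y' = y" using xy' by (metis doubleton_eq_iff)
    then show ?thesis using cs' True by blast
  next
    case False
    then have "x' = y" "y' = x" using xy' by (metis doubleton_eq_iff)+
    then have "rev (x' # m @ [y']) = x # rev m @ [y]" by simp
    then show ?thesis using cycle_list_rev[OF sym cs'(1)] cycle_edges_rev[of "x' # m @ [y']"] cs'
      by (intro exI[of _ "rev m"]) (metis set_rev)
  qed
qed

lemma cycle_list_glue_at_edge:
  assumes c1: "cycle_list R (x # m1 @ [y])" and c2: "cycle_list R (y # m2 @ [x])"
    and disj: "set m2 \<inter> set (x # m1 @ [y]) = {}"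
  shows "cycle_list R (x # m1 @ y # m2)"
    and "cycle_edges (x # m1 @ [y]) \<union> cycle_edges (y # m2 @ [x]) - {{x, y}}
           \<subseteq> cycle_edges (x # m1 @ y # m2)"
proof -
  have m2ne: "m2 \<noteq> []" using c2 unfolding cycle_list_def by auto
  have s1: "successively R (x # m1 @ [y])" and s2: "successively R (y # m2 @ [x])"
    using c1 c2 unfolding cycle_list_def by auto
  have s2': "successively R (y # m2)" and lx: "R (last m2) x"
    using s2 successively_append_iff[of R "y # m2" "[x]"] m2ne by auto
  have "distinct (x # m1 @ y # m2)" using c1 c2 disj unfolding cycle_list_def by auto
  moreover have "successively R (x # m1 @ y # m2)"
    using s1 s2' successively_append_iff[of R "x # m1 @ [y]" m2] m2ne
    by (simp add: successively_Cons)
  moreover have "length (x # m1 @ y # m2) \<ge> 3" using m2ne by (cases m2) auto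
  ultimately show "cycle_list R (x # m1 @ y # m2)" using lx m2ne unfolding cycle_list_def by auto
  have "cycle_edges (x # m1 @ y # m2) =
      insert {last m2, x} (path_edges (x # m1 @ [y]) \<union> path_edges m2 \<union> {{y, hd m2}})"
    unfolding cycle_edges_def using m2ne path_edges_append[of "x # m1 @ [y]" m2] by simp
  moreover have "cycle_edges (y # m2 @ [x]) =
      insert {x, y} ({{y, hd m2}} \<union> path_edges m2 \<union> {{last m2, x}})"
    using m2ne path_edges_append[of "y # m2" "[x]"] unfolding cycle_edges_def
    by (simp add: path_edges_Cons)
  ultimately show "cycle_edges (x # m1 @ [y]) \<union> cycle_edges (y # m2 @ [x]) - {{x, y}}
      \<subseteq> cycle_edges (x # m1 @ y # m2)"
    unfolding cycle_edges_def by (auto simp: insert_commute)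
qed

lemma cycle_list_glue:
  assumes sym: "symp R" and c1: "cycle_list R cs1" and c2: "cycle_list R cs2"
    and common: "set cs1 \<inter> set cs2 = {x, y}"
    and e1: "{x, y} \<in> cycle_edges cs1" and e2: "{x, y} \<in> cycle_edges cs2"
  shows "\<exists>cs. cycle_list R cs \<and> set cs = set cs1 \<union> set cs2 \<and>
              cycle_edges cs1 \<union> cycle_edges cs2 - {{x, y}} \<subseteq> cycle_edges cs"
proof -
  obtain m1 where m1: "cycle_list R (x # m1 @ [y])" "set (x # m1 @ [y]) = set cs1"
    "cycle_edges (x # m1 @ [y]) = cycle_edges cs1"
    using cycle_list_open_at_edge[OF sym c1 e1] by blast
  obtain m2 where m2: "cycle_list R (y # m2 @ [x])" "set (y # m2 @ [x]) = set cs2"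
    "cycle_edges (y # m2 @ [x]) = cycle_edges cs2"
    using cycle_list_open_at_edge[OF sym c2] e2 by (metis insert_commute)
  have "x \<notin> set m2" "y \<notin> set m2" using m2(1) unfolding cycle_list_def by auto
  then have "set m2 \<inter> set (x # m1 @ [y]) = {}" using common m1(2) m2(2) by auto
  note glued = cycle_list_glue_at_edge[OF m1(1) m2(1) this]
  moreover have "set (x # m1 @ y # m2) = set cs1 \<union> set cs2" using m1(2) m2(2) by auto
  ultimately show ?thesis using m1(3) m2(3) by (intro exI[of _ "x # m1 @ y # m2"]) auto
qed

lemma cycle_list_mono: "cycle_list R cs \<Longrightarrow> (\<And>a b. R a b \<Longrightarrow> R' a b) \<Longrightarrow> cycle_list R' cs"
  unfolding cycle_list_def using successively_mono by blast

lemma two_regular_path_interior_neighbours: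
  assumes sym: "symp E" and finB: "finite B" and deg: "\<And>w. w \<in> B \<Longrightarrow> card {u\<in>B. E w u} = 2"
    and xs: "distinct (p @ u # r)" "set (p @ u # r) \<subseteq> B" "successively E (p @ u # r)"
    and ne: "p \<noteq> []" "r \<noteq> []"
  shows "{w\<in>B. E u w} = {last p, hd r}"
proof -
  have "E (last p) u" "E u (hd r)" using xs(3) ne by (cases r; auto simp: successively_append_iff)+
  moreover have "last p \<in> B" "hd r \<in> B" using xs(2) ne by auto
  ultimately have sub: "{last p, hd r} \<subseteq> {w\<in>B. E u w}" using sym by (auto dest: sympD)
  have "last p \<in> set p" "hd r \<in> set r" using ne by auto
  then have "last p \<noteq> hd r" using xs(1) by auto
  then have "card {last p, hd r} = card {w\<in>B. E u w}" using deg xs(2) by auto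
  then show ?thesis using card_subset_eq[OF _ sub] finB by simp
qed

text \<open>The other neighbour of the last vertex must be the first one, since an interior vertex
  of the path has no neighbours besides its two path neighbours.\<close>

lemma two_regular_maximal_path_closes:
  assumes sym: "symp E" and irr: "\<And>a. \<not> E a a" and finB: "finite B"
    and deg: "\<And>w. w \<in> B \<Longrightarrow> card {u\<in>B. E w u} = 2"
    and dx: "distinct xs" and sxB: "set xs \<subseteq> B" and sx: "successively E xs" and xne: "xs \<noteq> []"
    and maximal: "{u\<in>B. E (last xs) u} \<subseteq> set xs"
  shows "cycle_list E xs"
proof -
  define z where "z = last xs"
  let ?N = "\<lambda>w. {u\<in>B. E w u}"
  have zB: "z \<in> B" using sxB xne unfolding z_def by auto
  obtain u1 u2 where u12: "?N z = {u1, u2}" "u1 \<noteq> u2" using deg[OF zB] by (meson card_2_iff)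
  have "u1 \<noteq> z" "u2 \<noteq> z" using u12(1) irr by blast+
  then have "card {u1, u2, z} = 3" using u12(2) by simp
  moreover have "{u1, u2, z} \<subseteq> set xs" using maximal u12(1) xne unfolding z_def by auto
  ultimately have len: "length xs \<ge> 3" using dx by (metis card_mono distinct_card List.finite_set)
  obtain ys y where xs: "xs = ys @ [y, z]"
  proof -
    have "butlast xs \<noteq> []" using len by (cases xs rule: rev_cases) auto
    then have "xs = butlast (butlast xs) @ [last (butlast xs), z]"
      using xne unfolding z_def by (metis append_butlast_last_id append.assoc append_Cons append_Nil)
    then show thesis by (rule that)
  qed
  have "y \<in> ?N z" using sx sxB sym unfolding xs by (auto simp: successively_append_iff dest: sympD)
  then obtain u where u: "?N z = {y, u}" "u \<noteq> y" using u12 by auto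
  have uN: "u \<in> ?N z" using u by auto
  have "E z (hd xs)"
  proof (rule ccontr)
    assume "\<not> E z (hd xs)"
    then have "u \<noteq> hd xs" using uN by auto
    have "u \<in> set xs" using maximal uN unfolding z_def by auto
    then have "u \<in> set ys" using u(2) uN irr xs by auto
    then obtain p q where ys: "ys = p @ u # q" by (meson split_list)
    have xs2: "xs = p @ u # (q @ [y, z])" using xs ys by simp
    have "p \<noteq> []" using \<open>u \<noteq> hd xs\<close> xs2 by auto
    then have "?N u = {last p, hd (q @ [y, z])}"
      using two_regular_path_interior_neighbours[OF sym finB deg] dx sxB sx unfolding xs2 by blast
    moreover have "z \<in> ?N u" using uN zB sym by (auto dest: sympD)
    moreover have "z \<noteq> last p" using dx \<open>p \<noteq> []\<close> unfolding xs2 by (auto dest!: last_in_set)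
    moreover have "z \<noteq> hd (q @ [y, z])" using dx unfolding xs2 by (cases q) auto
    ultimately show False by blast
  qed
  then show ?thesis unfolding cycle_list_def using len dx sx unfolding z_def by auto
qed

lemma two_regular_cycle_list_covers:
  assumes sym: "symp E" and conn: "connected_on E B" and finB: "finite B"
    and deg: "\<And>w. w \<in> B \<Longrightarrow> card {u\<in>B. E w u} = 2"
    and cyc: "cycle_list E xs" and sxB: "set xs \<subseteq> B" and xne: "xs \<noteq> []"
  shows "set xs = B"
proof -
  have "B \<subseteq> set xs"
  proof (rule connected_on_closed_subset[OF conn])
    show "hd xs \<in> B" "hd xs \<in> set xs" using sxB xne by auto
  next
    fix a c assume a: "a \<in> set xs" and ac: "E a c" and cB: "c \<in> B"
    then obtain p q where xs: "xs = p @ a # q" by (meson split_list)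
    \<comment> \<open>Rotating the cycle to start at \<open>a\<close> exhibits two distinct neighbours of \<open>a\<close> on it.\<close>
    have "cycle_list E ((a # q) @ p)"
      using cyc xs cycle_list_rotate[of E p "a # q"] by (cases "p = []") auto
    then have c': "cycle_list E (a # q @ p)" by simp
    then have "length (q @ p) \<ge> 2" unfolding cycle_list_def by simp
    then obtain h t where ht: "q @ p = h # t" "t \<noteq> []" by (cases "q @ p") (auto simp: Suc_le_eq)
    have ht_xs: "insert h (set t) \<subseteq> set xs" using xs arg_cong[OF ht(1), of set] by auto
    have lt: "last t \<in> set t" using ht(2) by simp
    have "E a h" "E (last t) a" "h \<noteq> last t" using c' ht lt unfolding cycle_list_def by auto
    then have nb: "{h, last t} \<subseteq> {u\<in>B. E a u}" using sym sxB ht_xs lt by (auto dest: sympD)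
    moreover have "card {h, last t} = card {u\<in>B. E a u}" using \<open>h \<noteq> last t\<close> deg a sxB by auto
    moreover have "finite {u\<in>B. E a u}" using finB by simp
    ultimately have "{h, last t} = {u\<in>B. E a u}" by (intro card_subset_eq)
    then show "c \<in> set xs" using ac cB ht_xs lt by auto
  qed
  then show ?thesis using sxB by auto
qed

lemma cycle_block_cycle_list:
  assumes sg: "sgraph V E" and bc: "block_is_cycle E B"
  shows "\<exists>xs. cycle_list E xs \<and> set xs = B"
proof -
  have finB: "finite B" and B3: "card B \<ge> 3" and conn: "connected_on E B"
    and deg: "\<And>w. w \<in> B \<Longrightarrow> card {u\<in>B. E w u} = 2"
    using bc unfolding block_is_cycle_def by auto
  have sym: "symp E" and irr: "\<And>a. \<not> E a a"
    using sg unfolding sgraph_def symp_def by blast+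
  define P where "P xs \<longleftrightarrow> distinct xs \<and> set xs \<subseteq> B \<and> successively E xs \<and> xs \<noteq> []" for xs
  obtain b0 where "b0 \<in> B" using B3 by fastforce
  then have "P [b0]" unfolding P_def by simp
  moreover have "\<forall>ys. P ys \<longrightarrow> length ys < Suc (card B)"
    using finB unfolding P_def by (metis card_mono distinct_card less_Suc_eq_le)
  ultimately obtain xs where Pxs: "P xs" and longest: "\<And>ys. P ys \<Longrightarrow> length ys \<le> length xs"
    using ex_has_greatest_nat[of P "[b0]" length "Suc (card B)"] by blast
  then have xs: "distinct xs" "set xs \<subseteq> B" "successively E xs" "xs \<noteq> []"
    unfolding P_def by auto
  have "{u\<in>B. E (last xs) u} \<subseteq> set xs"
  proof (rule subsetI, rule ccontr)
    fix u assume "u \<in> {u\<in>B. E (last xs) u}" "u \<notin> set xs"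
    then have "P (xs @ [u])" using xs unfolding P_def by (auto simp: successively_append_iff)
    then show False using longest[of "xs @ [u]"] by simp
  qed
  then have "cycle_list E xs" using two_regular_maximal_path_closes[OF sym irr finB deg xs] by blast
  then show ?thesis using two_regular_cycle_list_covers[OF sym conn finB deg _ xs(2,4)] by blast
qed

text \<open>The zigzag \<open>(a,0) (a,1) (b,1) (b,0)\<close> through consecutive pairs of a list returns to
  level 0 after an even number of vertices; this is where evenness of the cycles is needed.\<close>

fun prism :: "'a list \<Rightarrow> ('a \<times> nat) list" where
  "prism (a # b # rest) = [(a,0),(a,1),(b,1),(b,0)] @ prism rest"
| "prism [a] = [(a,0),(a,1)]"
| "prism [] = []"

lemma box_E_K2_iff: "box_E E K2_E V K2_V (a, i) (b, j) \<longleftrightarrow>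
   a \<in> V \<and> b \<in> V \<and> i \<in> {0,1} \<and> j \<in> {0,1} \<and> ((E a b \<and> i = j) \<or> (a = b \<and> i \<noteq> j))"
  unfolding box_E_def K2_E_def K2_V_def by auto

lemma prism_set: "set (prism c) = set c \<times> {0,1}"
  by (induction c rule: prism.induct) auto

lemma prism_hd: "c \<noteq> [] \<Longrightarrow> hd (prism c) = (hd c, 0)"
  by (induction c rule: prism.induct) auto

lemma prism_ne: "c \<noteq> [] \<Longrightarrow> prism c \<noteq> []"
  by (induction c rule: prism.induct) auto

lemma prism_last: "even (length c) \<Longrightarrow> c \<noteq> [] \<Longrightarrow> last (prism c) = (last c, 0)"
  by (induction c rule: prism.induct) (auto simp: prism_ne)

lemma prism_len: "length (prism c) = 2 * length c"
  by (induction c rule: prism.induct) auto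

lemma prism_distinct: "distinct c \<Longrightarrow> distinct (prism c)"
  by (induction c rule: prism.induct) (auto simp: prism_set)

lemma prism_succ:
  assumes "successively E c" "set c \<subseteq> V"
  shows "successively (box_E E K2_E V K2_V) (prism c)"
  using assms
proof (induction c rule: prism.induct)
  case (1 a b rest)
  have ab: "E a b" "a \<in> V" "b \<in> V" using 1 by auto
  have IH: "successively (box_E E K2_E V K2_V) (prism rest)"
    using 1 by (auto simp: successively_Cons)
  show ?case
  proof (cases rest)
    case Nil then show ?thesis using ab by (simp add: box_E_K2_iff)
  next
    case (Cons c rest')
    have "E b c" "c \<in> V" using 1(2,3) Cons by auto
    then have j: "box_E E K2_E V K2_V (b,0) (hd (prism rest))"
      using ab Cons prism_hd[of rest] by (simp add: box_E_K2_iff)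
    have f: "successively (box_E E K2_E V K2_V) [(a,0),(a,1),(b,1),(b,0)]"
      using ab by (simp add: box_E_K2_iff)
    show ?thesis unfolding prism.simps(1) successively_append_iff
      using f j IH by simp
  qed
qed (auto simp: box_E_K2_iff)

lemma prism_rungs: "w \<in> set c \<Longrightarrow> {(w,0),(w,1)} \<in> path_edges (prism c)"
proof (induction c rule: prism.induct)
  case (1 a b rest)
  have sub: "path_edges [(a,0),(a,1),(b,1),(b,0)] \<union> path_edges (prism rest) \<subseteq> path_edges (prism (a#b#rest))"
    unfolding prism.simps(1) path_edges_append by blast
  have "{(a,0::nat),(a,1)} \<in> path_edges [(a,0),(a,1),(b,1),(b,0)]" by simp
  moreover have "{(b,0::nat),(b,1)} \<in> path_edges [(a,0),(a,1),(b,1),(b,0)]"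
  proof -
    have e: "{(b,0::nat),(b,1)} = {(b,1),(b,0)}" by (rule insert_commute)
    have "{(b,1::nat),(b,0)} \<in> path_edges [(a,0),(a,1),(b,1),(b,0)]" by simp
    then show ?thesis unfolding e .
  qed
  moreover have "w = a \<or> w = b \<or> w \<in> set rest" using 1(2) by simp
  ultimately have "{(w,0::nat),(w,1)} \<in> path_edges [(a,0),(a,1),(b,1),(b,0)] \<union> path_edges (prism rest)"
    using 1(1) by blast
  then show ?case using sub by (rule subsetD[rotated])
qed auto

lemma path_edges_subset_cycle_edges: "path_edges xs \<subseteq> cycle_edges xs"
  unfolding cycle_edges_def by (cases xs) auto

lemma prism_cycle_list:
  assumes "cycle_list E c" "even (length c)" "set c \<subseteq> V"
  shows "\<exists>cs. cycle_list (box_E E K2_E V K2_V) cs \<and> set cs = set c \<times> {0,1} \<and>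
              (\<forall>w\<in>set c. {(w,0),(w,1)} \<in> cycle_edges cs)"
proof -
  have c: "length c \<ge> 3" "distinct c" "successively E c" "E (last c) (hd c)"
    using assms(1) unfolding cycle_list_def by auto
  have ne: "c \<noteq> []" using c by auto
  have "cycle_list (box_E E K2_E V K2_V) (prism c)" unfolding cycle_list_def
  proof (intro conjI)
    show "3 \<le> length (prism c)" using c prism_len[of c] by simp
    show "distinct (prism c)" using c prism_distinct by blast
    show "successively (box_E E K2_E V K2_V) (prism c)" using prism_succ c assms by blast
    have "last c \<in> V" "hd c \<in> V" using ne assms(3) by auto
    then show "box_E E K2_E V K2_V (last (prism c)) (hd (prism c))"
      using prism_last[OF assms(2) ne] prism_hd[OF ne] c by (simp add: box_E_K2_iff)
  qed
  moreover have "\<forall>w\<in>set c. {(w,0),(w,1)} \<in> cycle_edges (prism c)"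
  proof
    fix w assume "w \<in> set c"
    show "{(w,0),(w,1)} \<in> cycle_edges (prism c)" using subsetD[OF path_edges_subset_cycle_edges prism_rungs[OF \<open>w \<in> set c\<close>]] .
  qed
  moreover have "set (prism c) = set c \<times> {0,1}" by (rule prism_set)
  ultimately show ?thesis by blast
qed

lemma K2_prism_cycle_list:
  assumes "E x y" "E y x" "x \<noteq> y" "x \<in> V" "y \<in> V"
  shows "\<exists>cs. cycle_list (box_E E K2_E V K2_V) cs \<and> set cs = {x, y} \<times> {0,1} \<and>
              (\<forall>w\<in>{x,y}. {(w,0),(w,1)} \<in> cycle_edges cs)"
proof -
  let ?cs = "[(x,0),(x,1),(y,1),(y,0)]"
  have "cycle_list (box_E E K2_E V K2_V) ?cs" using assms unfolding cycle_list_def by (simp add: box_E_K2_iff)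
  moreover have "set ?cs = {x, y} \<times> {0,1}" by auto
  moreover have "\<forall>w\<in>{x,y}. {(w,0),(w,1)} \<in> cycle_edges ?cs" unfolding cycle_edges_def by (auto simp: insert_commute)
  ultimately show ?thesis by blast
qed

lemma box_E_K2_symp: "sgraph V E \<Longrightarrow> symp (box_E E K2_E V K2_V)"
  unfolding box_E_def K2_E_def sgraph_def symp_def by auto

definition rung_cycle :: "'a set \<Rightarrow> ('a \<Rightarrow> 'a \<Rightarrow> bool) \<Rightarrow> ('a \<times> nat) list \<Rightarrow> bool" where
  "rung_cycle V E cs \<longleftrightarrow> cycle_list (box_E E K2_E V K2_V) cs \<and> set cs = V \<times> {0,1} \<and>
     (\<forall>w\<in>V. card {B. is_block V E B \<and> w \<in> B} = 1 \<longrightarrow> {(w,0),(w,1)} \<in> cycle_edges cs)"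

lemma rung_cycle_block:
  assumes sc: "semi_cactus V E" and ev: "even_graph V E" and blk: "is_block V E V"
  shows "\<exists>cs. rung_cycle V E cs"
proof -
  have sg: "sgraph V E" using sc unfolding semi_cactus_def by blast
  have "block_is_cycle E V \<or> block_is_K2 E V" using sc blk unfolding semi_cactus_def by blast
  then obtain cs where "cycle_list (box_E E K2_E V K2_V) cs" "set cs = V \<times> {0,1}"
    "\<forall>w\<in>V. {(w,0),(w,1)} \<in> cycle_edges cs"
  proof
    assume "block_is_cycle E V"
    then obtain c where c: "cycle_list E c" "set c = V" using cycle_block_cycle_list[OF sg] by blast
    then have "is_cycle V E c" using is_cycle_iff_cycle_list by blast
    then have "even (length c)" using ev unfolding even_graph_def by blast
    then obtain cs where "cycle_list (box_E E K2_E V K2_V) cs" "set cs = set c \<times> {0,1}"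
      "\<forall>w\<in>set c. {(w,0),(w,1)} \<in> cycle_edges cs"
      using prism_cycle_list[OF c(1), of V] c(2) by blast
    then show ?thesis unfolding c(2) by (rule that)
  next
    assume "block_is_K2 E V"
    then obtain y z where "V = {y, z}" "y \<noteq> z" "E y z" unfolding block_is_K2_def by blast
    moreover have "E z y" using sg \<open>E y z\<close> unfolding sgraph_def by blast
    moreover have "y \<in> V" "z \<in> V" using \<open>V = {y, z}\<close> by auto
    ultimately obtain cs where "cycle_list (box_E E K2_E V K2_V) cs" "set cs = {y, z} \<times> {0,1}"
      "\<forall>w\<in>{y, z}. {(w,0),(w,1)} \<in> cycle_edges cs"
      using K2_prism_cycle_list[of E y z V] by blast
    then show ?thesis using that[of cs] \<open>V = {y, z}\<close> by simp
  qed
  then show ?thesis unfolding rung_cycle_def by blast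
qed

lemma one_block_per_vertex_is_block:
  assumes fin: "finite V" and sc: "semi_cactus V E"
    and one: "\<And>w. w \<in> V \<Longrightarrow> card {B. is_block V E B \<and> w \<in> B} = 1"
  shows "is_block V E V"
proof -
  have sg: "sgraph V E" and cV: "connected_on E V" and Vne: "V \<noteq> {}"
    using sc unfolding semi_cactus_def connected_graph_def by auto
  obtain x where xV: "x \<in> V" using Vne by blast
  obtain B where "{B. is_block V E B \<and> x \<in> B} = {B}" using card_1_singletonE[OF one[OF xV]] .
  then have B: "is_block V E B" "x \<in> B" by blast+
  have BV: "B \<subseteq> V" using B unfolding is_block_def by blast
  have "V = B"
  proof (rule ccontr)
    assume "V \<noteq> B"
    then obtain a c where ac: "a \<in> B" "c \<in> V - B" "E a c"
      using connected_on_crossing_edge[OF cV BV] B BV by blast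
    have "nonsep_on E {a, c}" using ac sg unfolding sgraph_def by (intro nonsep_on_edge) auto
    moreover have "{a, c} \<subseteq> V" using ac BV by auto
    ultimately obtain B' where B': "is_block V E B'" "{a, c} \<subseteq> B'"
      using nonsep_on_in_block[OF fin] by blast
    have "B \<noteq> B'" using B' ac by blast
    moreover have "{B, B'} \<subseteq> {B. is_block V E B \<and> a \<in> B}" using B B' ac by auto
    ultimately have "card {B, B'} \<le> card {B. is_block V E B \<and> a \<in> B}"
      using card_mono[OF finite_blocks[OF fin]] by blast
    then have "card {B. is_block V E B \<and> a \<in> B} \<ge> 2" using \<open>B \<noteq> B'\<close> by simp
    then show False using one[of a] ac BV by auto
  qed
  then show ?thesis using B by simp
qed

lemma (in cut_split) cut_single_block_in_side:
  assumes "{B. is_block V E B \<and> v \<in> B} = {B1, B2}" "B1 \<subseteq> V1" "B2 \<subseteq> V2"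
  shows "card {B. is_block V1 (induced E V1) B \<and> v \<in> B} = 1"
proof -
  have b2: "is_block V E B2" "v \<in> B2" using assms(1) by blast+
  obtain u where "u \<in> B2" "u \<noteq> v" using block_has_neighbour[OF semi_cactus b2] by blast
  then have "\<not> B2 \<subseteq> V1" using assms(3) sides_Int by blast
  have "{B. is_block V1 (induced E V1) B \<and> v \<in> B} = {B \<in> {B1, B2}. B \<subseteq> V1}"
    unfolding assms(1)[symmetric] using side_block_iff by auto
  also have "\<dots> = {B1}" using assms(2) \<open>\<not> B2 \<subseteq> V1\<close> by auto
  finally show ?thesis by simp
qed

lemma box_E_induced_mono:
  "S \<subseteq> V \<Longrightarrow> box_E (induced E S) K2_E S K2_V a b \<Longrightarrow> box_E E K2_E V K2_V a b"
  unfolding box_E_def induced_def by auto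

lemma (in cut_split) side_rung_cycle:
  assumes c: "rung_cycle V1 (induced E V1) cs"
  shows "cycle_list (box_E E K2_E V K2_V) cs" and "set cs = V1 \<times> {0,1}"
    and "w \<in> V1 - {v} \<Longrightarrow> card {B. is_block V E B \<and> w \<in> B} = 1 \<Longrightarrow> {(w,0),(w,1)} \<in> cycle_edges cs"
    and "card {B. is_block V1 (induced E V1) B \<and> v \<in> B} = 1 \<Longrightarrow> {(v,0),(v,1)} \<in> cycle_edges cs"
proof -
  have "cycle_list (box_E (induced E V1) K2_E V1 K2_V) cs" using c unfolding rung_cycle_def by blast
  then show "cycle_list (box_E E K2_E V K2_V) cs"
    by (rule cycle_list_mono) (rule box_E_induced_mono[OF side_subset])
  show "set cs = V1 \<times> {0,1}" using c unfolding rung_cycle_def by blast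
  show "{(w,0),(w,1)} \<in> cycle_edges cs"
    if w: "w \<in> V1 - {v}" "card {B. is_block V E B \<and> w \<in> B} = 1"
  proof -
    have "card {B. is_block V1 (induced E V1) B \<and> w \<in> B} = 1" using side_blocks_at[OF w(1)] w(2) by simp
    then show ?thesis using c w(1) unfolding rung_cycle_def by blast
  qed
  show "card {B. is_block V1 (induced E V1) B \<and> v \<in> B} = 1 \<Longrightarrow> {(v,0),(v,1)} \<in> cycle_edges cs"
    using c cut_in_side unfolding rung_cycle_def by blast
qed

lemma (in cut_split) rung_cycle_glue:
  assumes c1: "rung_cycle V1 (induced E V1) cs1" and c2: "rung_cycle V2 (induced E V2) cs2"
    and v1: "card {B. is_block V1 (induced E V1) B \<and> v \<in> B} = 1"
    and v2: "card {B. is_block V2 (induced E V2) B \<and> v \<in> B} = 1"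
    and v: "card {B. is_block V E B \<and> v \<in> B} \<noteq> 1"
  shows "\<exists>cs. rung_cycle V E cs"
proof -
  interpret swap: cut_split V V2 V1 E v by (rule swap)
  note s1 = side_rung_cycle[OF c1] and s2 = swap.side_rung_cycle[OF c2]
  have "set cs1 \<inter> set cs2 = {(v,0),(v,1)}" using s1(2) s2(2) sides_Int by auto
  then obtain cs where cs: "cycle_list (box_E E K2_E V K2_V) cs" "set cs = set cs1 \<union> set cs2"
      "cycle_edges cs1 \<union> cycle_edges cs2 - {{(v,0),(v,1)}} \<subseteq> cycle_edges cs"
    using cycle_list_glue[OF box_E_K2_symp[OF sgraph] s1(1) s2(1) _ s1(4)[OF v1] s2(4)[OF v2]]
    by blast
  have "{(w,0),(w,1)} \<in> cycle_edges cs" if w: "w \<in> V" "card {B. is_block V E B \<and> w \<in> B} = 1" for w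
  proof -
    have "w \<noteq> v"
    proof
      assume "w = v"
      with w(2) v show False by simp
    qed
    then have "w \<in> V1 - {v} \<or> w \<in> V2 - {v}" using w(1) sides_Un by blast
    then have "{(w,0),(w,1)} \<in> cycle_edges cs1 \<union> cycle_edges cs2"
      using s1(3) s2(3) w(2) by blast
    moreover have "{(w,0::nat),(w,1)} \<noteq> {(v,0),(v,1)}" using \<open>w \<noteq> v\<close> by (simp add: doubleton_eq_iff)
    ultimately have "{(w,0),(w,1)} \<in> cycle_edges cs1 \<union> cycle_edges cs2 - {{(v,0),(v,1)}}" by simp
    then show ?thesis using cs(3) by (rule subsetD[rotated])
  qed
  then have "\<forall>w\<in>V. card {B. is_block V E B \<and> w \<in> B} = 1 \<longrightarrow> {(w,0),(w,1)} \<in> cycle_edges cs"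
    by blast
  moreover have "set cs = V \<times> {0,1}" using cs(2) s1(2) s2(2) sides_Un by auto
  ultimately have "rung_cycle V E cs" using cs(1) unfolding rung_cycle_def by (intro conjI)
  then show ?thesis ..
qed

lemma rung_cycle_exists:
  assumes "finite V" "semi_cactus V E" "even_graph V E"
  shows "\<exists>cs. rung_cycle V E cs"
  using assms
proof (induction "card V" arbitrary: V E rule: less_induct)
  case less
  show ?case
  proof (cases "\<exists>v\<in>V. card {B. is_block V E B \<and> v \<in> B} = 2")
    case True
    then obtain v B1 B2 where v: "{B. is_block V E B \<and> v \<in> B} = {B1, B2}" "B1 \<noteq> B2"
      by (meson card_2_iff)
    then obtain V1 V2 where split: "cut_split V V1 V2 E v" and B1: "B1 \<subseteq> V1" and B2: "B2 \<subseteq> V2"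
      using cut_vertex_split[OF less.prems(1,2), of B1 v B2] by blast
    interpret cut_split V V1 V2 E v by (rule split)
    interpret swap: cut_split V V2 V1 E v by (rule swap)
    obtain cs1 where "rung_cycle V1 (induced E V1) cs1"
      using less.hyps[OF side_card_less side_finite side_semi_cactus side_even[OF less.prems(3)]]
      by blast
    moreover obtain cs2 where "rung_cycle V2 (induced E V2) cs2"
      using less.hyps[OF swap.side_card_less swap.side_finite swap.side_semi_cactus
          swap.side_even[OF less.prems(3)]]
      by blast
    moreover have "card {B. is_block V1 (induced E V1) B \<and> v \<in> B} = 1"
      using cut_single_block_in_side[OF v(1) B1 B2] .
    moreover have "card {B. is_block V2 (induced E V2) B \<and> v \<in> B} = 1"
      using swap.cut_single_block_in_side[OF _ B2 B1] v(1) by (simp add: insert_commute)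
    moreover have "card {B. is_block V E B \<and> v \<in> B} \<noteq> 1" using v by simp
    ultimately show ?thesis by (rule rung_cycle_glue)
  next
    case False
    then have "card {B. is_block V E B \<and> w \<in> B} = 1" if "w \<in> V" for w
      using less.prems(2) that unfolding semi_cactus_def by auto
    then show ?thesis
      using rung_cycle_block one_block_per_vertex_is_block less.prems by blast
  qed
qed

theorem lemma21:
  fixes V :: "'a set" and E :: "'a \<Rightarrow> 'a \<Rightarrow> bool"
  assumes "finite V"
    and "semi_cactus V E"
    and "even_graph V E"
  shows "hamiltonian (box_V V K2_V) (box_E E K2_E V K2_V)"
proof -
  obtain cs where cs: "rung_cycle V E cs" using rung_cycle_exists[OF assms] by blast
  have "box_V V K2_V = V \<times> {0,1}" unfolding box_V_def K2_V_def by simp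
  then show ?thesis
    using cs unfolding hamiltonian_def rung_cycle_def is_cycle_iff_cycle_list by auto
qed

end
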